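(* Let $g_1,\dots,g_r\in\mathbb R[X_1,\dots,X_n]$ satisfy $1-\|\mathbf X\|_2^2\in\mathcal Q(\mathbf g)$ and $\|g_i\|\le\tfrac12$, with $S=\mathcal S(\mathbf g)\ne\emptyset$. Let $f\in\mathbb R[\mathbf X]$ with $f^*=\min_S f>0$, let $A=\{x\in[-1,1]^n: f(x)\le\frac{3f^*}{4}\}$, and let $0<\delta\le 1$ be such that $G(x)\ge\delta$ for all $x\in A$. Let $k>0$, $m\in\mathbb N$ and let $h_{k,m}\in\mathbb R[T]$ be a univariate polynomial of degree $m$ such that: $1-\frac1k\le h_{k,m}(t)\le1+\frac1k$ for $t\in[-1,-\delta]$; $h_{k,m}(t)\le\frac2k$ for $t\in[0,1]$; $0\le h_{k,m}(t)\le1+\frac1k$ for $t\in[-1,1]$. Let $s>0$. If $$s>\frac{6\|f\|}{\delta},\qquad k>\frac{2r-2}{\delta}+1,\qquad k>\frac{4rs}{f^*},$$ then $p=f-s\sum_{i=1}^r h_{k,m}(g_i)\,g_i$ satisfies $p\ge\frac{f^*}{2}$ on $[-1,1]^n$.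
   Context: $\Sigma^2$ sums of squares, $\mathcal S(\mathbf g)=\{x:g_i(x)\ge0\ \forall i\}$, $\mathcal Q(\mathbf g)=\Sigma^2+\sum_i\Sigma^2g_i$, $\|h\|=\max_{[-1,1]^n}|h|$, $\|\mathbf X\|_2^2=\sum X_i^2$, $G(x)=|\min\{g_1(x),\dots,g_r(x),0\}|$. *)

theory Defs
  imports "HOL-Analysis.Analysis" "HOL-Computational_Algebra.Polynomial"
begin

definition poly_fun :: "(real^'n \<Rightarrow> real) \<Rightarrow> bool" where
  "poly_fun f \<longleftrightarrow> (\<exists>M c. finite M \<and>
     (\<forall>x. f x = (\<Sum>\<alpha>\<in>M. c \<alpha> * (\<Prod>i\<in>UNIV. (x $ i) ^ (\<alpha> i)))))"

definition sos_fun :: "(real^'n \<Rightarrow> real) \<Rightarrow> bool" where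
  "sos_fun f \<longleftrightarrow> (\<exists>qs. list_all poly_fun qs \<and>
     (\<forall>x. f x = sum_list (map (\<lambda>q. (q x)^2) qs)))"

definition in_quadmodule :: "(real^'n \<Rightarrow> real) \<Rightarrow> nat \<Rightarrow> (nat \<Rightarrow> real^'n \<Rightarrow> real) \<Rightarrow> bool" where
  "in_quadmodule f r g \<longleftrightarrow> (\<exists>\<sigma>. (\<forall>i\<in>{0..r}. sos_fun (\<sigma> i)) \<and>
     (\<forall>x. f x = \<sigma> 0 x + (\<Sum>i=1..r. \<sigma> i x * g i x)))"

definition semialg :: "nat \<Rightarrow> (nat \<Rightarrow> real^'n \<Rightarrow> real) \<Rightarrow> (real^'n) set" where
  "semialg r g = {x. \<forall>i\<in>{1..r}. g i x \<ge> 0}"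

definition cube :: "(real^'n) set" where
  "cube = {x. \<forall>i. \<bar>x $ i\<bar> \<le> 1}"

definition cube_norm :: "(real^'n \<Rightarrow> real) \<Rightarrow> real" where
  "cube_norm h = Sup ((\<lambda>x. \<bar>h x\<bar>) ` cube)"

definition Gfun :: "nat \<Rightarrow> (nat \<Rightarrow> real^'n \<Rightarrow> real) \<Rightarrow> real^'n \<Rightarrow> real" where
  "Gfun r g x = \<bar>Min (insert 0 ((\<lambda>i. g i x) ` {1..r}))\<bar>"

end

theory Submission
  imports Defs
begin

text \<open>On the cube every \<open>|g\<^sub>i|\<close> is at most \<open>1/2\<close>, so each term \<open>h(g\<^sub>i) g\<^sub>i\<close> is at most \<open>1/k\<close>.
  Where \<open>f > 3f\<^sup>*/4\<close> the whole penalty \<open>s r/k\<close> is below \<open>f\<^sup>*/4\<close>. Where \<open>f \<le> 3f\<^sup>*/4\<close> some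
  constraint has \<open>g\<^sub>j \<le> -\<delta>\<close>, and its term \<open>h(g\<^sub>j) g\<^sub>j \<le> -(1 - 1/k)\<delta>\<close> outweighs the other
  \<open>r - 1\<close> terms, so that \<open>p \<ge> -\<parallel>f\<parallel> + s\<delta>/4 > \<parallel>f\<parallel>/2\<close>. Finally \<open>f\<^sup>* \<le> \<parallel>f\<parallel>\<close>, because the
  certificate for \<open>1 - \<parallel>X\<parallel>\<^sup>2\<close> puts \<open>S\<close> inside the unit ball and hence inside the cube.\<close>

lemma abs_monomial_le_1:
  fixes x :: "real^'n"
  assumes "x \<in> cube"
  shows "\<bar>\<Prod>i\<in>UNIV. (x $ i) ^ \<alpha> i\<bar> \<le> 1"
proof -
  have "\<bar>\<Prod>i\<in>UNIV. (x $ i) ^ \<alpha> i\<bar> = (\<Prod>i\<in>UNIV. \<bar>x $ i\<bar> ^ \<alpha> i)"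
    by (simp add: abs_prod power_abs)
  also have "\<dots> \<le> 1"
    using assms unfolding cube_def by (intro prod_le_1) (auto intro: power_le_one)
  finally show ?thesis .
qed

lemma poly_fun_bounded_on_cube:
  fixes f :: "real^'n \<Rightarrow> real"
  assumes "poly_fun f"
  shows "bdd_above ((\<lambda>x. \<bar>f x\<bar>) ` cube)"
proof -
  obtain M c where M: "finite M" "\<And>x. f x = (\<Sum>\<alpha>\<in>M. c \<alpha> * (\<Prod>i\<in>UNIV. (x $ i) ^ \<alpha> i))"
    using assms unfolding poly_fun_def by blast
  have "\<bar>f x\<bar> \<le> (\<Sum>\<alpha>\<in>M. \<bar>c \<alpha>\<bar>)" if "x \<in> cube" for x
  proof -
    have "\<bar>f x\<bar> \<le> (\<Sum>\<alpha>\<in>M. \<bar>c \<alpha>\<bar> * \<bar>\<Prod>i\<in>UNIV. (x $ i) ^ \<alpha> i\<bar>)"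
      unfolding M(2) abs_mult[symmetric] by (rule sum_abs)
    also have "\<dots> \<le> (\<Sum>\<alpha>\<in>M. \<bar>c \<alpha>\<bar>)"
      using abs_monomial_le_1[OF that] by (intro sum_mono) (simp add: mult_left_le)
    finally show ?thesis .
  qed
  then show ?thesis by (auto intro!: bdd_aboveI)
qed

lemma poly_fun_abs_le_cube_norm:
  fixes f :: "real^'n \<Rightarrow> real"
  assumes "poly_fun f" "x \<in> cube"
  shows "\<bar>f x\<bar> \<le> cube_norm f"
  unfolding cube_norm_def using poly_fun_bounded_on_cube[OF assms(1)] assms(2)
  by (auto intro: cSup_upper)

lemma sum_squares_le_1_imp_cube:
  fixes x :: "real^'n"
  assumes "(\<Sum>j\<in>UNIV. (x $ j)^2) \<le> 1"
  shows "x \<in> cube"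
  unfolding cube_def
proof (intro CollectI allI)
  fix j
  have "(x $ j)^2 \<le> (\<Sum>j\<in>UNIV. (x $ j)^2)"
    by (rule member_le_sum) auto
  with assms have "(x $ j)^2 \<le> 1"
    by linarith
  then show "\<bar>x $ j\<bar> \<le> 1"
    by (simp add: abs_square_le_1)
qed

lemma sos_fun_nonneg:
  assumes "sos_fun \<sigma>"
  shows "0 \<le> \<sigma> x"
proof -
  obtain qs where "\<forall>y. \<sigma> y = sum_list (map (\<lambda>q. (q y)^2) qs)"
    using assms unfolding sos_fun_def by blast
  moreover have "0 \<le> sum_list (map (\<lambda>q. (q x)^2) qs)"
    by (rule sum_list_nonneg) auto
  ultimately show ?thesis
    by simp
qed

lemma in_quadmodule_nonneg_on_semialg:
  assumes "in_quadmodule q r g" "x \<in> semialg r g"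
  shows "0 \<le> q x"
proof -
  obtain \<sigma> where \<sigma>: "\<forall>i\<in>{0..r}. sos_fun (\<sigma> i)"
    "\<forall>y. q y = \<sigma> 0 y + (\<Sum>i=1..r. \<sigma> i y * g i y)"
    using assms(1) unfolding in_quadmodule_def by blast
  have "0 \<le> \<sigma> i x" if "i \<in> {0..r}" for i
    using \<sigma>(1) that by (blast intro: sos_fun_nonneg)
  then have "0 \<le> \<sigma> 0 x + (\<Sum>i=1..r. \<sigma> i x * g i x)"
    using assms(2) unfolding semialg_def
    by (intro add_nonneg_nonneg sum_nonneg mult_nonneg_nonneg) auto
  then show ?thesis
    using \<sigma>(2) by simp
qed

lemma semialg_subset_cube:
  assumes "in_quadmodule (\<lambda>x. 1 - (\<Sum>j\<in>UNIV. (x $ j)^2)) r g"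
  shows "semialg r g \<subseteq> cube"
  using in_quadmodule_nonneg_on_semialg[OF assms] sum_squares_le_1_imp_cube by fastforce

lemma Gfun_geD:
  assumes "Gfun r g x \<ge> \<delta>" "\<delta> > 0"
  obtains j where "j \<in> {1..r}" "g j x \<le> -\<delta>"
proof -
  define \<mu> where "\<mu> = Min (insert 0 ((\<lambda>i. g i x) ` {1..r}))"
  have "\<mu> \<le> 0"
    unfolding \<mu>_def by (intro Min_le) auto
  with assms have "\<mu> \<le> -\<delta>"
    unfolding Gfun_def \<mu>_def[symmetric] by linarith
  moreover have "\<mu> \<in> insert 0 ((\<lambda>i. g i x) ` {1..r})"
    unfolding \<mu>_def by (intro Min_in) auto
  ultimately show ?thesis
    using that assms(2) by force
qed

lemma sum_bounded_above_except:
  fixes u :: "'a \<Rightarrow> real"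
  assumes "finite I" "j \<in> I" "u j \<le> a" "\<forall>i\<in>I. u i \<le> b"
  shows "sum u I \<le> a + (real (card I) - 1) * b"
proof -
  have "sum u (I - {j}) \<le> real (card (I - {j})) * b"
    using assms(4) sum_bounded_above[of "I - {j}" u b] by auto
  moreover have "card I \<ge> 1"
    using assms(1,2) by (auto simp: Suc_le_eq card_gt_0_iff)
  then have "real (card (I - {j})) = real (card I) - 1"
    using assms(2) by (simp add: of_nat_diff)
  ultimately show ?thesis
    using assms(1-3) by (simp add: sum.remove)
qed

lemma penalty_term_le:
  fixes \<phi> :: "real \<Rightarrow> real"
  assumes "\<bar>t\<bar> \<le> 1/2" "0 \<le> \<phi> t" "0 \<le> t \<Longrightarrow> \<phi> t \<le> 2/k" "k > 0"
  shows "\<phi> t * t \<le> 1/k"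
proof (cases "t \<ge> 0")
  case True
  then have "\<phi> t * t \<le> 2/k * t"
    using assms(3) by (intro mult_right_mono) auto
  also have "\<dots> \<le> 2/k * (1/2)"
    using assms(1,4) by (intro mult_left_mono) auto
  finally show ?thesis by simp
next
  case False
  then have "\<phi> t * t \<le> 0"
    using assms(2) by (simp add: mult_nonneg_nonpos)
  moreover have "0 < 1/k"
    using assms(4) by simp
  ultimately show ?thesis
    by linarith
qed

lemma penalty_term_le_neg:
  fixes \<phi> :: "real \<Rightarrow> real"
  assumes "t \<le> -\<delta>" "1 - 1/k \<le> \<phi> t" "k \<ge> 1" "\<delta> \<ge> 0"
  shows "\<phi> t * t \<le> -((1 - 1/k) * \<delta>)"
proof -
  have "\<phi> t * t \<le> (1 - 1/k) * t"
    using assms by (intro mult_right_mono_neg) auto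
  also have "\<dots> \<le> (1 - 1/k) * (-\<delta>)"
    using assms(1,3) by (intro mult_left_mono) (auto simp: field_simps)
  finally show ?thesis by simp
qed

text \<open>In the next two lemmas \<open>y\<close> is the value \<open>f(x)\<close>, \<open>u\<close> the family of penalty terms
  and \<open>N\<close> the norm \<open>\<parallel>f\<parallel>\<close>.\<close>

lemma penalized_ge_far:
  fixes u :: "'a \<Rightarrow> real"
  assumes "finite I" "\<forall>i\<in>I. u i \<le> 1/k" "k > 4 * real (card I) * s / fstar"
    "fstar > 0" "s > 0" "k > 0" "y > 3 * fstar / 4"
  shows "y - s * sum u I \<ge> fstar / 2"
proof -
  have "sum u I \<le> real (card I) * (1/k)"
    using assms(2) sum_bounded_above[of I u "1/k"] by auto
  then have "s * sum u I \<le> s * (real (card I) * (1/k))"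
    using assms(5) by (intro mult_left_mono) auto
  moreover have "4 * real (card I) * s \<le> k * fstar"
    using assms(3,4) by (simp add: divide_less_eq)
  then have "s * (real (card I) * (1/k)) \<le> fstar / 4"
    using assms(6) by (simp add: field_simps)
  ultimately show ?thesis
    using assms(7) by linarith
qed

lemma near_penalty_margin:
  fixes r k \<delta> :: real
  assumes "\<delta> > 0" "k \<ge> 2" "k > (2 * r - 2) / \<delta> + 1"
  shows "(1 - 1/k) * \<delta> - (r - 1) / k \<ge> \<delta> / 4"
proof -
  have "k * \<delta> - \<delta> > 2 * r - 2"
    using assms(1,3) by (simp add: field_simps)
  moreover have "k * \<delta> \<ge> 2 * \<delta>"
    using assms(1,2) by (intro mult_right_mono) auto
  ultimately have "k * \<delta> / 4 \<le> k * \<delta> - \<delta> - (r - 1)"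
    by linarith
  also have "\<dots> = ((1 - 1/k) * \<delta> - (r - 1) / k) * k"
    using assms(2) by (simp add: field_simps)
  finally show ?thesis
    using assms(2) by simp
qed

lemma penalized_ge_near:
  fixes u :: "'a \<Rightarrow> real"
  assumes "finite I" "j \<in> I" "u j \<le> -((1 - 1/k) * \<delta>)" "\<forall>i\<in>I. u i \<le> 1/k"
    "0 < \<delta>" "\<delta> \<le> 1" "fstar > 0" "s > 0" "fstar \<le> N" "-N \<le> y"
    "s > 6 * N / \<delta>" "k > (2 * real (card I) - 2) / \<delta> + 1"
    "k > 4 * real (card I) * s / fstar"
  shows "y - s * sum u I \<ge> fstar / 2"
proof -
  have "card I \<ge> 1"
    using assms(1,2) by (auto simp: Suc_le_eq card_gt_0_iff)
  have "N / \<delta> \<ge> N"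
    using assms(5-7,9) by (simp add: le_divide_eq)
  with assms(9,11) have "s > 6 * fstar" by linarith
  moreover have "4 * s \<le> 4 * real (card I) * s"
    using \<open>card I \<ge> 1\<close> assms(8) by simp
  moreover have "4 * real (card I) * s < k * fstar"
    using assms(7,13) by (simp add: pos_divide_less_eq)
  ultimately have "k * fstar > 24 * fstar"
    by linarith
  then have "k \<ge> 2"
    using assms(7) by simp
  define X where "X = (1 - 1/k) * \<delta> - (real (card I) - 1) / k"
  have "X \<ge> \<delta> / 4"
    unfolding X_def using near_penalty_margin assms(5,12) \<open>k \<ge> 2\<close> by simp
  then have "s * X \<ge> (6 * N / \<delta>) * (\<delta> / 4)"
    using assms(5,7,8,9,11) by (intro mult_mono) auto
  then have "s * X \<ge> 3/2 * N"
    using assms(5) by (simp add: field_simps)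
  moreover have "sum u I \<le> -X"
    unfolding X_def using sum_bounded_above_except[OF assms(1-4)] by (simp add: diff_divide_distrib)
  then have "s * sum u I \<le> s * (-X)"
    using assms(8) by (intro mult_left_mono) auto
  ultimately show ?thesis
    using assms(9,10) by linarith
qed

theorem mainTheorem8:
  fixes g :: "nat \<Rightarrow> real^'n \<Rightarrow> real" and r :: nat
    and f :: "real^'n \<Rightarrow> real" and fstar \<delta> k s :: real
    and m :: nat and h :: "real poly"
  assumes g_poly: "\<forall>i\<in>{1..r}. poly_fun (g i)"
    and arch: "in_quadmodule (\<lambda>x. 1 - (\<Sum>j\<in>UNIV. (x $ j)^2)) r g"
    and g_norm: "\<forall>i\<in>{1..r}. cube_norm (g i) \<le> 1/2"
    and S_ne: "semialg r g \<noteq> {}"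
    and f_poly: "poly_fun f"
    and fstar_min: "(\<exists>x\<in>semialg r g. f x = fstar) \<and> (\<forall>x\<in>semialg r g. fstar \<le> f x)"
    and fstar_pos: "fstar > 0"
    and delta: "0 < \<delta>" "\<delta> \<le> 1"
    and G_bound: "\<forall>x\<in>{x\<in>cube. f x \<le> 3 * fstar / 4}. Gfun r g x \<ge> \<delta>"
    and k_pos: "k > 0"
    and h_deg: "degree h = m"
    and h1: "\<forall>t\<in>{-1..-\<delta>}. 1 - 1/k \<le> poly h t \<and> poly h t \<le> 1 + 1/k"
    and h2: "\<forall>t\<in>{0..1}. poly h t \<le> 2/k"
    and h3: "\<forall>t\<in>{-1..1}. 0 \<le> poly h t \<and> poly h t \<le> 1 + 1/k"
    and s_pos: "s > 0"
    and s_big: "s > 6 * cube_norm f / \<delta>"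
    and k_big1: "k > (2 * real r - 2) / \<delta> + 1"
    and k_big2: "k > 4 * real r * s / fstar"
  shows "\<forall>x\<in>cube. f x - s * (\<Sum>i=1..r. poly h (g i x) * g i x) \<ge> fstar / 2"
proof
  fix x :: "real^'n" assume x: "x \<in> cube"
  have g_half: "\<bar>g i x\<bar> \<le> 1/2" if "i \<in> {1..r}" for i
    using poly_fun_abs_le_cube_norm[OF _ x, of "g i"] g_poly g_norm that by force
  have term_le: "\<forall>i\<in>{1..r}. poly h (g i x) * g i x \<le> 1/k"
    using g_half h2 h3 k_pos by (intro ballI penalty_term_le) force+
  have "fstar \<le> cube_norm f"
    using fstar_min semialg_subset_cube[OF arch] poly_fun_abs_le_cube_norm[OF f_poly] by force
  show "f x - s * (\<Sum>i=1..r. poly h (g i x) * g i x) \<ge> fstar / 2"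
  proof (cases "f x \<le> 3 * fstar / 4")
    case True
    then obtain j where j: "j \<in> {1..r}" "g j x \<le> -\<delta>"
      using G_bound x delta(1) Gfun_geD by blast
    have "g j x \<in> {-1..-\<delta>}"
      using g_half[OF j(1)] j(2) by auto
    moreover have "(2 * real r - 2) / \<delta> \<ge> 0"
      using j(1) delta(1) by simp
    then have "k \<ge> 1"
      using k_big1 by linarith
    ultimately have "poly h (g j x) * g j x \<le> -((1 - 1/k) * \<delta>)"
      using h1 delta(1) by (intro penalty_term_le_neg) auto
    then show ?thesis
      using j(1) term_le delta fstar_pos s_pos \<open>fstar \<le> cube_norm f\<close>
        poly_fun_abs_le_cube_norm[OF f_poly x] s_big k_big1 k_big2
      by (intro penalized_ge_near[where N = "cube_norm f"]) auto
  next
    case False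
    then show ?thesis
      using term_le k_big2 fstar_pos s_pos k_pos by (intro penalized_ge_far[where k = k]) auto
  qed
qed

end
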